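(* Let $G=(V,E)$ be a diamond-free graph and $xy\in E$. For $i\ge 1$ let $N_i=\{z\in V:\ \min(\mathrm{dist}_G(z,x),\mathrm{dist}_G(z,y))=i\}$, and suppose $N_2=\{u_1,\dots,u_k\}$ is an independent set. For $j\in\{1,\dots,k\}$ let $T_j=\{t\in N_3:\ N(t)\cap N_2=\{u_j\}\}$. Let $Y=V\setminus(\{x,y\}\cup N_1\cup N_2\cup N_3)$. Let $z\in N_4$ have no neighbor in $Y$, and suppose $z$ is adjacent to some $t_i\in T_i$. Then every dominating induced matching $M$ of $G$ with $xy\in M$ contains the edge $u_it_i$. Moreover, if $|N(z)\cap T_i|\ge 2$, then $G$ has no dominating induced matching $M$ with $xy\in M$.
   Context: All graphs are finite, simple and undirected; $\mathrm{dist}_G$ is the shortest-path distance and $N(v)$ the set of neighbors of $v$. A set $M$ of edges is a dominating induced matching if every edge of $G$ shares at least one vertex with exactly one edge of $M$. A diamond is $K_4$ minus one edge. *)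

theory Defs
  imports Main "HOL-Library.Extended_Nat"
begin

definition graph :: "'a set \<Rightarrow> ('a \<Rightarrow> 'a \<Rightarrow> bool) \<Rightarrow> bool" where
  "graph V E \<longleftrightarrow> finite V \<and>
     (\<forall>u v. E u v \<longrightarrow> u \<in> V \<and> v \<in> V \<and> u \<noteq> v \<and> E v u)"

definition nbhd :: "'a set \<Rightarrow> ('a \<Rightarrow> 'a \<Rightarrow> bool) \<Rightarrow> 'a \<Rightarrow> 'a set" where
  "nbhd V E v = {w \<in> V. E v w}"

definition edges :: "('a \<Rightarrow> 'a \<Rightarrow> bool) \<Rightarrow> 'a set set" where
  "edges E = {{u, v} | u v. E u v}"

definition walk_len :: "'a set \<Rightarrow> ('a \<Rightarrow> 'a \<Rightarrow> bool) \<Rightarrow> nat \<Rightarrow> 'a \<Rightarrow> 'a \<Rightarrow> bool" where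
  "walk_len V E n u v \<longleftrightarrow> (\<exists>p :: nat \<Rightarrow> 'a. p 0 = u \<and> p n = v \<and>
      (\<forall>i\<le>n. p i \<in> V) \<and> (\<forall>i<n. E (p i) (p (Suc i))))"

(* shortest-path distance; infinity if no path *)
definition gdist :: "'a set \<Rightarrow> ('a \<Rightarrow> 'a \<Rightarrow> bool) \<Rightarrow> 'a \<Rightarrow> 'a \<Rightarrow> enat" where
  "gdist V E u v = (INF n \<in> {n. walk_len V E n u v}. enat n)"

(* diamond = K4 minus one edge; diamond-free = no induced diamond *)
definition diamond_free :: "'a set \<Rightarrow> ('a \<Rightarrow> 'a \<Rightarrow> bool) \<Rightarrow> bool" where
  "diamond_free V E \<longleftrightarrow> \<not> (\<exists>a\<in>V. \<exists>b\<in>V. \<exists>c\<in>V. \<exists>d\<in>V.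
      distinct [a, b, c, d] \<and> E a b \<and> E a c \<and> E a d \<and> E b c \<and> E b d \<and> \<not> E c d)"

definition independent :: "('a \<Rightarrow> 'a \<Rightarrow> bool) \<Rightarrow> 'a set \<Rightarrow> bool" where
  "independent E S \<longleftrightarrow> (\<forall>u\<in>S. \<forall>v\<in>S. \<not> E u v)"

definition dim :: "('a \<Rightarrow> 'a \<Rightarrow> bool) \<Rightarrow> 'a set set \<Rightarrow> bool" where
  "dim E M \<longleftrightarrow> M \<subseteq> edges E \<and>
     (\<forall>e\<in>edges E. card {m \<in> M. m \<inter> e \<noteq> {}} = 1)"

definition layer :: "'a set \<Rightarrow> ('a \<Rightarrow> 'a \<Rightarrow> bool) \<Rightarrow> 'a \<Rightarrow> 'a \<Rightarrow> nat \<Rightarrow> 'a set" where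
  "layer V E x y i = {z \<in> V. min (gdist V E z x) (gdist V E z y) = enat i}"

end

theory Submission
  imports Defs
begin

text \<open>
  Let M be a dominating induced matching containing xy. A vertex of N1 is adjacent to x or y,
  so its edge to the matched edge xy is already dominated by xy; hence no vertex of N1 is
  matched, and consequently every vertex of N2 is matched (its edge down to N1 must be dominated).
  Since z has no neighbour in Y, all its neighbours lie in N3. If z were matched to some s in N3,
  the matched vertex of N2 below s would be covered by a second matching edge dominating the
  same edge, which is impossible; so z is unmatched and the edge z t forces t to be matched.
  The edge u t meets the matching edges through u and through t, which therefore coincide:
  u t is in M. Two distinct candidates t, t' would put u t and u t' into M, two matching
  edges sharing the vertex u.
\<close>

lemma walk_len_0_iff: "walk_len V E 0 u v \<longleftrightarrow> u \<in> V \<and> v = u"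
  unfolding walk_len_def by auto

lemma walk_len_Cons:
  assumes "E a b" "a \<in> V" "walk_len V E n b v"
  shows "walk_len V E (Suc n) a v"
proof -
  obtain p where p: "p 0 = b" "p n = v" "\<forall>i\<le>n. p i \<in> V" "\<forall>i<n. E (p i) (p (Suc i))"
    using assms(3) unfolding walk_len_def by blast
  define q where "q i = (case i of 0 \<Rightarrow> a | Suc j \<Rightarrow> p j)" for i
  have "\<forall>i<Suc n. E (q i) (q (Suc i))"
    using assms(1) p(1,4) by (auto simp: q_def less_Suc_eq_0_disj)
  moreover have "\<forall>i\<le>Suc n. q i \<in> V"
    using assms(2) p(3) by (auto simp: q_def split: nat.split)
  ultimately show ?thesis
    unfolding walk_len_def using p(2) by (intro exI[of _ q]) (simp add: q_def)
qed

lemma walk_len_SucE: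
  assumes "walk_len V E (Suc n) u v"
  obtains w where "E u w" "walk_len V E n w v"
proof -
  obtain p where p: "p 0 = u" "p (Suc n) = v" "\<forall>i\<le>Suc n. p i \<in> V"
      "\<forall>i<Suc n. E (p i) (p (Suc i))"
    using assms unfolding walk_len_def by blast
  have "E u (p 1)" using p by auto
  moreover have "walk_len V E n (p 1) v"
    unfolding walk_len_def using p by (intro exI[of _ "\<lambda>i. p (Suc i)"]) auto
  ultimately show thesis by (rule that)
qed

lemma gdist_le_if_walk_len: "walk_len V E n u v \<Longrightarrow> gdist V E u v \<le> enat n"
  unfolding gdist_def by (rule INF_lower) simp

lemma walk_len_if_gdist_eq:
  assumes "gdist V E u v = enat n"
  shows "walk_len V E n u v"
proof -
  have "{n. walk_len V E n u v} \<noteq> {}"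
  proof
    assume "{n. walk_len V E n u v} = {}"
    then have "gdist V E u v = \<infinity>" unfolding gdist_def by (simp add: top_enat_def)
    with assms show False by simp
  qed
  then have walk: "walk_len V E (LEAST n. walk_len V E n u v) u v"
    by (metis Collect_empty_eq LeastI)
  have "gdist V E u v = enat (LEAST n. walk_len V E n u v)"
  proof (rule antisym)
    show "gdist V E u v \<le> enat (LEAST n. walk_len V E n u v)"
      using walk by (rule gdist_le_if_walk_len)
    show "enat (LEAST n. walk_len V E n u v) \<le> gdist V E u v"
      unfolding gdist_def by (rule INF_greatest) (simp add: Least_le)
  qed
  with assms walk show ?thesis by simp
qed

lemma gdist_self: "v \<in> V \<Longrightarrow> gdist V E v v = 0"
  using gdist_le_if_walk_len[of V E 0 v v] by (metis walk_len_0_iff le_zero_eq zero_enat_def)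

lemma gdist_eq_0D: "gdist V E u v = 0 \<Longrightarrow> u = v"
  using walk_len_if_gdist_eq[of V E u v 0] by (simp add: walk_len_0_iff zero_enat_def)

lemma gdist_neighbour_le:
  assumes "graph V E" "E a b"
  shows "gdist V E a v \<le> eSuc (gdist V E b v)"
proof (cases "gdist V E b v")
  case (enat n)
  have "a \<in> V" using assms unfolding graph_def by blast
  with assms(2) enat have "walk_len V E (Suc n) a v"
    by (intro walk_len_Cons walk_len_if_gdist_eq)
  then show ?thesis
    using enat by (simp add: eSuc_enat gdist_le_if_walk_len)
qed simp

definition edge_dist :: "'a set \<Rightarrow> ('a \<Rightarrow> 'a \<Rightarrow> bool) \<Rightarrow> 'a \<Rightarrow> 'a \<Rightarrow> 'a \<Rightarrow> enat" where
  "edge_dist V E x y v = min (gdist V E v x) (gdist V E v y)"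

lemma mem_layer_iff: "v \<in> layer V E x y i \<longleftrightarrow> v \<in> V \<and> edge_dist V E x y v = enat i"
  unfolding layer_def edge_dist_def by simp

lemma layer_unique: "v \<in> layer V E x y i \<Longrightarrow> v \<in> layer V E x y j \<Longrightarrow> i = j"
  by (simp add: mem_layer_iff)

lemma edge_dist_neighbour_le:
  assumes "graph V E" "E a b"
  shows "edge_dist V E x y a \<le> eSuc (edge_dist V E x y b)"
  using gdist_neighbour_le[OF assms, of x] gdist_neighbour_le[OF assms, of y]
  unfolding edge_dist_def by (auto simp: min_def)

lemma layer_neighbour_le:
  assumes "graph V E" "E a b" "a \<in> layer V E x y i" "b \<in> layer V E x y j"
  shows "i \<le> Suc j"
  using edge_dist_neighbour_le[OF assms(1,2), of x y] assms(3,4)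
  by (simp add: mem_layer_iff eSuc_enat)

lemma layer_Suc_neighbour:
  assumes g: "graph V E" and v: "v \<in> layer V E x y (Suc n)"
  obtains w where "E v w" "w \<in> layer V E x y n"
proof -
  obtain c where c: "gdist V E v c = enat (Suc n)" "c = x \<or> c = y"
    using v unfolding mem_layer_iff edge_dist_def by (metis min_def)
  obtain w where w: "E v w" "walk_len V E n w c"
    using walk_len_if_gdist_eq[OF c(1)] by (rule walk_len_SucE)
  have "edge_dist V E x y w \<le> enat n"
    using gdist_le_if_walk_len[OF w(2)] c(2) unfolding edge_dist_def
    by (metis min.coboundedI1 min.coboundedI2)
  moreover have "eSuc (enat n) \<le> eSuc (edge_dist V E x y w)"
    using edge_dist_neighbour_le[OF g w(1), of x y] v by (simp add: mem_layer_iff eSuc_enat)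
  moreover have "w \<in> V" using g w(1) unfolding graph_def by blast
  ultimately show thesis using w(1) that by (simp add: mem_layer_iff)
qed

lemma layer_0:
  assumes "graph V E" "E x y"
  shows "layer V E x y 0 = {x, y}"
proof -
  have "x \<in> V" "y \<in> V" using assms unfolding graph_def by blast+
  then show ?thesis
    unfolding layer_def by (auto simp: gdist_self zero_enat_def[symmetric] min_def
        split: if_splits dest: gdist_eq_0D)
qed

lemma layer_1_neighbour:
  assumes "graph V E" "E x y" "w \<in> layer V E x y 1"
  shows "(E w x \<or> E w y) \<and> w \<notin> {x, y}"
proof
  have "w \<in> layer V E x y (Suc 0)" using assms(3) by simp
  then obtain v where "E w v" "v \<in> layer V E x y 0" by (rule layer_Suc_neighbour[OF assms(1)])
  then show "E w x \<or> E w y" using layer_0[OF assms(1,2)] by auto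
  show "w \<notin> {x, y}"
  proof
    assume "w \<in> {x, y}"
    then have "w \<in> layer V E x y 0" using layer_0[OF assms(1,2)] by simp
    with assms(3) show False using layer_unique by fastforce
  qed
qed

lemma layer_4_neighbour_in_layer_3:
  assumes g: "graph V E" and xy: "E x y" and z: "z \<in> layer V E x y 4"
    and no_far_neighbour: "nbhd V E z \<inter> (V - ({x, y} \<union> layer V E x y 1
        \<union> layer V E x y 2 \<union> layer V E x y 3)) = {}"
    and s: "E z s"
  shows "s \<in> layer V E x y 3"
proof -
  have "s \<in> nbhd V E z" using g s unfolding graph_def nbhd_def by blast
  then have "s \<in> layer V E x y 0 \<union> layer V E x y 1 \<union> layer V E x y 2 \<union> layer V E x y 3"
    using no_far_neighbour layer_0[OF g xy] unfolding nbhd_def by blast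
  then obtain j where j: "j \<le> 3" "s \<in> layer V E x y j"
    by (elim UnE) (auto intro: that[of 0] that[of 1] that[of 2] that[of 3])
  moreover have "4 \<le> Suc j" using layer_neighbour_le[OF g s z j(2)] .
  ultimately have "j = 3" by simp
  with j(2) show ?thesis by simp
qed

lemma edge_in_edges: "E a b \<Longrightarrow> {a, b} \<in> edges E"
  unfolding edges_def by blast

lemma dim_dominating_edge_unique:
  assumes "dim E M" "E a b"
  shows "\<exists>m. {m \<in> M. m \<inter> {a, b} \<noteq> {}} = {m}"
proof -
  have "\<forall>e\<in>edges E. card {m \<in> M. m \<inter> e \<noteq> {}} = 1"
    using assms(1) unfolding dim_def by (rule conjunct2)
  then have "card {m \<in> M. m \<inter> {a, b} \<noteq> {}} = 1"
    using edge_in_edges[where E = E, OF assms(2)] by (rule bspec)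
  then show ?thesis by (simp add: card_1_singleton_iff)
qed

lemma dim_dominates:
  assumes "dim E M" "E a b"
  obtains m where "m \<in> M" "m \<inter> {a, b} \<noteq> {}"
proof -
  obtain m where "{m \<in> M. m \<inter> {a, b} \<noteq> {}} = {m}"
    using dim_dominating_edge_unique[OF assms] by blast
  then have "m \<in> {m \<in> M. m \<inter> {a, b} \<noteq> {}}" by simp
  then show thesis using that by blast
qed

lemma dim_dominates_uniquely:
  assumes "dim E M" "E a b"
    and "m1 \<in> M" "m1 \<inter> {a, b} \<noteq> {}" "m2 \<in> M" "m2 \<inter> {a, b} \<noteq> {}"
  shows "m1 = m2"
proof -
  obtain m where dominating: "{m \<in> M. m \<inter> {a, b} \<noteq> {}} = {m}"
    using dim_dominating_edge_unique[OF assms(1,2)] by blast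
  have "m1 \<in> {m \<in> M. m \<inter> {a, b} \<noteq> {}}" "m2 \<in> {m \<in> M. m \<inter> {a, b} \<noteq> {}}"
    using assms(3-6) by simp_all
  then show ?thesis unfolding dominating by simp
qed

lemma dim_memberE:
  assumes "graph V E" "dim E M" "m \<in> M" "a \<in> m"
  obtains b where "E a b" "m = {a, b}"
proof -
  obtain p q where "m = {p, q}" "E p q"
    using assms(2,3) unfolding dim_def edges_def by blast
  with assms(1,4) that show thesis unfolding graph_def by (metis insert_commute insertE singletonD)
qed

lemma dim_neighbours_matched_together:
  assumes "dim E M" "E a b" "m \<in> M" "a \<in> m" "m' \<in> M" "b \<in> m'"
  shows "m = m'"
  using dim_dominates_uniquely[OF assms(1,2)] assms(3-6) by blast

lemma dim_is_matching:
  assumes "graph V E" "dim E M" "m \<in> M" "m' \<in> M" "v \<in> m" "v \<in> m'"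
  shows "m = m'"
proof -
  obtain b where "E v b" "m = {v, b}" using dim_memberE[OF assms(1-3,5)] .
  then show ?thesis using dim_dominates_uniquely[OF assms(2)] assms(3-6) by blast
qed

lemma dim_partner_unique:
  assumes "graph V E" "dim E M" "{u, t} \<in> M" "{u, t'} \<in> M" "t \<noteq> u" "t' \<noteq> u"
  shows "t = t'"
proof -
  have "{u, t} = {u, t'}" using dim_is_matching[OF assms(1-4), of u] by simp
  with assms(5,6) show ?thesis by (auto simp: doubleton_eq_iff)
qed

lemma dim_neighbour_of_unmatched_matched:
  assumes "dim E M" "E a b" "a \<notin> \<Union>M"
  shows "b \<in> \<Union>M"
  using dim_dominates[OF assms(1,2)] assms(3) by blast

lemma dim_forced_edge:
  assumes g: "graph V E" and M: "dim E M" and a: "a \<notin> \<Union>M" and ab: "E a b"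
    and bc: "E b c" and c: "c \<in> \<Union>M"
  shows "{b, c} \<in> M"
proof -
  obtain m where m: "m \<in> M" "b \<in> m"
    using dim_neighbour_of_unmatched_matched[OF M ab a] by blast
  obtain m' where m': "m' \<in> M" "c \<in> m'" using c by blast
  have "m = m'" using dim_neighbours_matched_together[OF M bc m m'] .
  then have "c \<in> m" using m' by simp
  moreover obtain d where "m = {b, d}" using dim_memberE[OF g M m] .
  moreover have "c \<noteq> b" using g bc unfolding graph_def by blast
  ultimately have "m = {b, c}" by blast
  with m(1) show ?thesis by simp
qed

lemma layer_1_unmatched:
  assumes g: "graph V E" and xy: "E x y" and M: "dim E M" "{x, y} \<in> M"
    and w: "w \<in> layer V E x y 1"
  shows "w \<notin> \<Union>M"
proof
  assume "w \<in> \<Union>M"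
  then obtain m where m: "m \<in> M" "w \<in> m" by blast
  obtain c where c: "E w c" "c \<in> {x, y}" and "w \<notin> {x, y}"
    using layer_1_neighbour[OF g xy w] by blast
  moreover have "m = {x, y}"
    using dim_dominates_uniquely[OF M(1) c(1) m(1) _ M(2)] m(2) c(2) by blast
  ultimately show False using m(2) by blast
qed

lemma layer_2_matched:
  assumes g: "graph V E" and xy: "E x y" and M: "dim E M" "{x, y} \<in> M"
    and u: "u \<in> layer V E x y 2"
  shows "u \<in> \<Union>M"
proof -
  obtain w where "E u w" "w \<in> layer V E x y 1"
    using layer_Suc_neighbour[OF g, of u x y 1] u by (auto simp: numeral_2_eq_2)
  then show ?thesis
    using g layer_1_unmatched[OF g xy M] dim_neighbour_of_unmatched_matched[OF M(1)]
    unfolding graph_def by blast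
qed

lemma unmatched_if_neighbours_in_layer_3:
  assumes g: "graph V E" and xy: "E x y" and M: "dim E M" "{x, y} \<in> M"
    and z: "z \<notin> layer V E x y 2" and nbrs: "\<And>s. E z s \<Longrightarrow> s \<in> layer V E x y 3"
  shows "z \<notin> \<Union>M"
proof
  assume "z \<in> \<Union>M"
  then obtain m where m: "m \<in> M" "z \<in> m" by blast
  obtain s where s: "E z s" "m = {z, s}" using dim_memberE[OF g M(1) m] .
  obtain w where w: "E s w" "w \<in> layer V E x y 2"
    using layer_Suc_neighbour[OF g, of s x y 2] nbrs[OF s(1)] by (auto simp: numeral_3_eq_3)
  obtain m' where m': "m' \<in> M" "w \<in> m'" using layer_2_matched[OF g xy M w(2)] by blast
  have "m = m'" using dim_neighbours_matched_together[OF M(1) w(1) m(1) _ m'] s(2) by blast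
  moreover have "w \<noteq> s" using g w(1) unfolding graph_def by blast
  ultimately show False using m'(2) s(2) w(2) z by blast
qed

lemma layer_4_unmatched:
  assumes g: "graph V E" and xy: "E x y" and M: "dim E M" "{x, y} \<in> M"
    and z: "z \<in> layer V E x y 4"
    and no_far_neighbour: "nbhd V E z \<inter> (V - ({x, y} \<union> layer V E x y 1
        \<union> layer V E x y 2 \<union> layer V E x y 3)) = {}"
  shows "z \<notin> \<Union>M"
proof (rule unmatched_if_neighbours_in_layer_3[OF g xy M])
  show "z \<notin> layer V E x y 2" using z layer_unique by fastforce
  show "s \<in> layer V E x y 3" if "E z s" for s
    using layer_4_neighbour_in_layer_3[OF g xy z no_far_neighbour that] .
qed

theorem proposition1:
  fixes V :: "'a set" and E :: "'a \<Rightarrow> 'a \<Rightarrow> bool" and x y z u t :: 'a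
  assumes "graph V E"
    and "diamond_free V E"
    and "E x y"
    and "independent E (layer V E x y 2)"
    and "u \<in> layer V E x y 2"
    and "t \<in> layer V E x y 3"
    and "nbhd V E t \<inter> layer V E x y 2 = {u}"
    and "z \<in> layer V E x y 4"
    and "nbhd V E z \<inter> (V - ({x, y} \<union> layer V E x y 1 \<union> layer V E x y 2 \<union> layer V E x y 3)) = {}"
    and "E z t"
  shows "(\<forall>M. dim E M \<and> {x, y} \<in> M \<longrightarrow> {u, t} \<in> M)
       \<and> (card (nbhd V E z \<inter> {t' \<in> layer V E x y 3. nbhd V E t' \<inter> layer V E x y 2 = {u}}) \<ge> 2
            \<longrightarrow> \<not> (\<exists>M. dim E M \<and> {x, y} \<in> M))"
proof -
  have forced: "{u, t'} \<in> M" if M: "dim E M" "{x, y} \<in> M" and "E z t'" "E t' u" for M t'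
    using dim_forced_edge[OF assms(1) M(1) layer_4_unmatched[OF assms(1,3) M assms(8,9)] that(3,4)
        layer_2_matched[OF assms(1,3) M assms(5)]]
    by (simp add: insert_commute)
  have tu: "E t u" using assms(7) unfolding nbhd_def by blast
  show ?thesis
  proof (intro conjI allI impI notI)
    fix M assume "dim E M \<and> {x, y} \<in> M"
    then show "{u, t} \<in> M" using forced assms(10) tu by blast
  next
    let ?T = "nbhd V E z \<inter> {t' \<in> layer V E x y 3. nbhd V E t' \<inter> layer V E x y 2 = {u}}"
    assume two: "2 \<le> card ?T" and "\<exists>M. dim E M \<and> {x, y} \<in> M"
    then obtain M where M: "dim E M" "{x, y} \<in> M" by blast
    have "t' = t" if "t' \<in> ?T" for t'
    proof -
      have t': "E z t'" "E t' u" using that unfolding nbhd_def by blast+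
      show ?thesis
        using dim_partner_unique[OF assms(1) M(1) forced[OF M t'] forced[OF M assms(10) tu]]
          assms(1) t'(2) tu unfolding graph_def by blast
    qed
    then have "card ?T \<le> card {t}" by (intro card_mono) auto
    with two show False by simp
  qed
qed

end
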